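(* Let $G$ be a simple undirected graph with infinite chromatic number $\chi(G)$. Then there is a minor $M$ of $G$ such that $M\not\cong G$ and $\chi(M)=\chi(G)$.
   Context: Graphs are simple and undirected: $G=(V,E)$ with $E \subseteq \{\{x,y\}: x,y\in V,\ x\neq y\}$. $\chi(G)$ denotes the chromatic number of $G$, i.e. the least cardinal $\lambda$ such that there is a graph homomorphism $G \to K_\lambda$; $K_\alpha$ is the complete graph on $\alpha$ vertices. Disjoint sets $S,T\subseteq V(G)$ are connected to each other if there are $s\in S$, $t\in T$ with $\{s,t\}\in E(G)$. For a collection $\mathcal D$ of pairwise disjoint, nonempty subsets of $V(G)$, each inducing a connected subgraph, let $G(\mathcal D)$ be the graph with vertex set $\mathcal D$ in which distinct $d,e\in\mathcal D$ are adjacent iff $d$ and $e$ are connected to each other. A graph $M$ is a minor of $G$ if there is such a collection $\mathcal D$ and an injective graph homomorphism $M \to G(\mathcal D)$. *)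

theory Defs
  imports Main
begin

definition simple_graph :: "'a set \<Rightarrow> 'a set set \<Rightarrow> bool" where
  "simple_graph V E \<longleftrightarrow> E \<subseteq> {{x, y} | x y. x \<in> V \<and> y \<in> V \<and> x \<noteq> y}"

definition hom_to_complete :: "'a set \<Rightarrow> 'a set set \<Rightarrow> 'c set \<Rightarrow> bool" where
  "hom_to_complete V E C \<longleftrightarrow>
     (\<exists>f. f ` V \<subseteq> C \<and> (\<forall>x\<in>V. \<forall>y\<in>V. {x, y} \<in> E \<longrightarrow> f x \<noteq> f y))"

text \<open>Colour sets of type 'a set suffice,
  since V itself is always a colour set for a simple graph.\<close>
definition chromatic_number :: "'a set \<Rightarrow> 'a set set \<Rightarrow> 'a rel" where
  "chromatic_number V E = card_of (SOME C :: 'a set. hom_to_complete V E C \<and>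
       (\<forall>C' :: 'a set. hom_to_complete V E C' \<longrightarrow> (card_of C, card_of C') \<in> ordLeq))"

definition induces_connected :: "'a set set \<Rightarrow> 'a set \<Rightarrow> bool" where
  "induces_connected E S \<longleftrightarrow>
     (\<forall>x\<in>S. \<forall>y\<in>S. (x, y) \<in> {(u, v). u \<in> S \<and> v \<in> S \<and> {u, v} \<in> E}\<^sup>*)"

definition connected_to :: "'a set set \<Rightarrow> 'a set \<Rightarrow> 'a set \<Rightarrow> bool" where
  "connected_to E S T \<longleftrightarrow> (\<exists>s\<in>S. \<exists>t\<in>T. {s, t} \<in> E)"

definition is_minor :: "'b set \<Rightarrow> 'b set set \<Rightarrow> 'a set \<Rightarrow> 'a set set \<Rightarrow> bool" where
  "is_minor VM EM V E \<longleftrightarrow>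
     (\<exists>D :: 'a set set.
        (\<forall>d\<in>D. d \<noteq> {} \<and> d \<subseteq> V \<and> induces_connected E d) \<and>
        (\<forall>d\<in>D. \<forall>e\<in>D. d \<noteq> e \<longrightarrow> d \<inter> e = {}) \<and>
        (\<exists>h. inj_on h VM \<and> h ` VM \<subseteq> D \<and>
             (\<forall>x\<in>VM. \<forall>y\<in>VM. {x, y} \<in> EM \<longrightarrow> h x \<noteq> h y \<and> connected_to E (h x) (h y))))"

definition graph_iso :: "'b set \<Rightarrow> 'b set set \<Rightarrow> 'a set \<Rightarrow> 'a set set \<Rightarrow> bool" where
  "graph_iso V1 E1 V2 E2 \<longleftrightarrow>
     (\<exists>f. bij_betw f V1 V2 \<and> (\<forall>x\<in>V1. \<forall>y\<in>V1. {x, y} \<in> E1 \<longleftrightarrow> {f x, f y} \<in> E2))"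

end

theory Submission
  imports Defs
begin

text \<open>Whether a graph has an isolated vertex is an isomorphism invariant, so it suffices to
  find a subgraph with the same chromatic number that differs from G in this respect.  If G
  has isolated vertices, delete them: they can be coloured like any other vertex, and some
  vertex is non-isolated since an edgeless graph needs at most one colour.  Otherwise remove
  all edges at one vertex: this isolates it and saves at most one colour, which is negligible
  against an infinite chromatic number.  Replacing each vertex x by {x} turns the subgraph into
  a minor of G whose vertices are sets of vertices of G.\<close>

unbundle cardinal_syntax

lemma simple_graph_edgeD:
  assumes "simple_graph V E" "{x, y} \<in> E"
  shows "x \<in> V" "y \<in> V" "x \<noteq> y"
  using assms unfolding simple_graph_def by (auto simp: doubleton_eq_iff)

lemma hom_to_complete_vertices:
  assumes "simple_graph V E"
  shows "hom_to_complete V E V"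
  unfolding hom_to_complete_def
  using simple_graph_edgeD[OF assms] by (intro exI[of _ id]) auto

lemma hom_to_complete_mono:
  assumes "V' \<subseteq> V" "E' \<subseteq> E" "hom_to_complete V E C"
  shows "hom_to_complete V' E' C"
proof -
  obtain f where "f ` V \<subseteq> C" "\<forall>x\<in>V. \<forall>y\<in>V. {x, y} \<in> E \<longrightarrow> f x \<noteq> f y"
    using assms(3) unfolding hom_to_complete_def by blast
  with assms(1,2) show ?thesis
    unfolding hom_to_complete_def by (intro exI[of _ f]) blast
qed

lemma hom_to_complete_colours_in_vertex_type:
  assumes "hom_to_complete (V :: 'a set) E (C :: 'c set)"
  obtains C' :: "'a set" where "hom_to_complete V E C'" "|C'| \<le>o |C|"
proof -
  obtain f where f: "f ` V \<subseteq> C" "\<forall>x\<in>V. \<forall>y\<in>V. {x, y} \<in> E \<longrightarrow> f x \<noteq> f y"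
    using assms unfolding hom_to_complete_def by blast
  have "|f ` V| \<le>o |V|" by (rule card_of_image)
  then obtain j where j: "inj_on j (f ` V)" "j ` f ` V \<subseteq> V"
    unfolding card_of_ordLeq[symmetric] by blast
  have "hom_to_complete V E (j ` f ` V)"
    unfolding hom_to_complete_def
  proof (intro exI[of _ "j \<circ> f"] conjI ballI impI)
    fix x y assume "x \<in> V" "y \<in> V" "{x, y} \<in> E"
    then show "(j \<circ> f) x \<noteq> (j \<circ> f) y"
      using f(2) inj_onD[OF j(1)] by (metis comp_apply imageI)
  qed auto
  moreover have "|j ` f ` V| \<le>o |C|"
    using ordLeq_transitive[OF card_of_image card_of_mono1[OF f(1)]] .
  ultimately show ?thesis using that by blast
qed

lemma chromatic_number_minimal_colouring:
  assumes "simple_graph (V :: 'a set) E"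
  obtains C :: "'a set" where "hom_to_complete V E C" "chromatic_number V E = |C|"
    "\<And>C' :: 'a set. hom_to_complete V E C' \<Longrightarrow> |C| \<le>o |C'|"
proof -
  let ?R = "card_of ` {C :: 'a set. hom_to_complete V E C}"
  obtain r where r: "r \<in> ?R" "\<forall>r'\<in>?R. r \<le>o r'"
    using exists_minim_Well_order[of ?R] hom_to_complete_vertices[OF assms] card_of_Well_order
    by blast
  then have "\<exists>C :: 'a set. hom_to_complete V E C \<and>
      (\<forall>C' :: 'a set. hom_to_complete V E C' \<longrightarrow> (card_of C, card_of C') \<in> ordLeq)"
    by blast
  from someI_ex[OF this] show ?thesis
    using that unfolding chromatic_number_def by blast
qed

lemma chromatic_number_le_card:
  assumes "simple_graph V E" "hom_to_complete V E C"
  shows "chromatic_number V E \<le>o |C|"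
proof -
  obtain C' :: "'a set" where C': "hom_to_complete V E C'" "|C'| \<le>o |C|"
    using hom_to_complete_colours_in_vertex_type[OF assms(2)] .
  obtain C0 where "chromatic_number V E = |C0|" "|C0| \<le>o |C'|"
    using chromatic_number_minimal_colouring[OF assms(1)] C'(1) by metis
  then show ?thesis using ordLeq_transitive C'(2) by metis
qed

lemma chromatic_number_ordLeqI:
  assumes "simple_graph (V1 :: 'a set) E1" "simple_graph (V2 :: 'b set) E2"
    and "\<And>C2 :: 'b set. hom_to_complete V2 E2 C2 \<Longrightarrow>
          \<exists>C1 :: 'c set. hom_to_complete V1 E1 C1 \<and> |C1| \<le>o |C2|"
  shows "chromatic_number V1 E1 \<le>o chromatic_number V2 E2"
proof -
  obtain C2 where C2: "hom_to_complete V2 E2 C2" "chromatic_number V2 E2 = |C2|"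
    using chromatic_number_minimal_colouring[OF assms(2)] by metis
  obtain C1 :: "'c set" where "hom_to_complete V1 E1 C1" "|C1| \<le>o |C2|"
    using assms(3)[OF C2(1)] by blast
  then show ?thesis
    using ordLeq_transitive[OF chromatic_number_le_card[OF assms(1)]] C2(2) by metis
qed

lemma infinite_colours:
  assumes "simple_graph V E" "infinite (Field (chromatic_number V E))" "hom_to_complete V E C"
  shows "infinite C"
proof -
  obtain C0 where "chromatic_number V E = |C0|"
    using chromatic_number_minimal_colouring[OF assms(1)] by metis
  with assms show ?thesis
    using card_of_ordLeq_infinite chromatic_number_le_card by (metis Field_card_of)
qed

lemma chromatic_number_subgraph_le:
  assumes "simple_graph V E" "simple_graph V' E'" "V' \<subseteq> V" "E' \<subseteq> E"
  shows "chromatic_number V' E' \<le>o chromatic_number V E"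
  using assms hom_to_complete_mono ordLeq_refl[OF card_of_Card_order]
  by (intro chromatic_number_ordLeqI) blast+

lemma inj_image_doubleton_mem_iff:
  assumes "inj f"
  shows "{f x, f y} \<in> (`) f ` E \<longleftrightarrow> {x, y} \<in> E"
proof -
  have "inj ((`) f)" using assms by (simp add: inj_def inj_image_eq_iff)
  then show ?thesis using inj_image_mem_iff[of "(`) f" "{x, y}" E] by simp
qed

lemma simple_graph_inj_image:
  assumes "inj f" "simple_graph V E"
  shows "simple_graph (f ` V) ((`) f ` E)"
  using assms unfolding simple_graph_def by (fastforce dest: injD)

lemma hom_to_complete_inj_image_iff:
  assumes "inj f"
  shows "hom_to_complete (f ` V) ((`) f ` E) C \<longleftrightarrow> hom_to_complete V E C"
proof
  assume "hom_to_complete (f ` V) ((`) f ` E) C"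
  then obtain g where "g ` f ` V \<subseteq> C"
    "\<forall>X\<in>f ` V. \<forall>Y\<in>f ` V. {X, Y} \<in> (`) f ` E \<longrightarrow> g X \<noteq> g Y"
    unfolding hom_to_complete_def by blast
  then show "hom_to_complete V E C"
    unfolding hom_to_complete_def inj_image_doubleton_mem_iff[OF assms, symmetric]
    by (intro exI[of _ "g \<circ> f"]) auto
next
  assume "hom_to_complete V E C"
  then obtain c where "c ` V \<subseteq> C" "\<forall>x\<in>V. \<forall>y\<in>V. {x, y} \<in> E \<longrightarrow> c x \<noteq> c y"
    unfolding hom_to_complete_def by blast
  then show "hom_to_complete (f ` V) ((`) f ` E) C"
    unfolding hom_to_complete_def
    by (intro exI[of _ "c \<circ> inv f"])
      (auto simp: inv_f_f[OF assms] inj_image_doubleton_mem_iff[OF assms])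
qed

lemma chromatic_number_inj_image:
  assumes "inj f" "simple_graph V E"
  shows "chromatic_number (f ` V) ((`) f ` E) =o chromatic_number V E"
proof -
  have simple_image: "simple_graph (f ` V) ((`) f ` E)"
    using simple_graph_inj_image[OF assms] .
  show ?thesis
    unfolding ordIso_iff_ordLeq
  proof
    show "chromatic_number (f ` V) ((`) f ` E) \<le>o chromatic_number V E"
      using hom_to_complete_inj_image_iff[OF assms(1)] ordLeq_refl[OF card_of_Card_order]
      by (intro chromatic_number_ordLeqI[OF simple_image assms(2)]) blast
    show "chromatic_number V E \<le>o chromatic_number (f ` V) ((`) f ` E)"
      using hom_to_complete_inj_image_iff[OF assms(1)] ordLeq_refl[OF card_of_Card_order]
      by (intro chromatic_number_ordLeqI[OF assms(2) simple_image]) blast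
  qed
qed

definition has_isolated_vertex :: "'a set \<Rightarrow> 'a set set \<Rightarrow> bool" where
  "has_isolated_vertex V E \<longleftrightarrow> (\<exists>x\<in>V. \<forall>y. {x, y} \<notin> E)"

lemma has_isolated_vertex_inj_image_iff:
  assumes "inj f"
  shows "has_isolated_vertex (f ` V) ((`) f ` E) \<longleftrightarrow> has_isolated_vertex V E"
proof
  assume "has_isolated_vertex (f ` V) ((`) f ` E)"
  then show "has_isolated_vertex V E"
    unfolding has_isolated_vertex_def by (metis imageE inj_image_doubleton_mem_iff[OF assms])
next
  assume "has_isolated_vertex V E"
  then obtain x where x: "x \<in> V" "\<forall>y. {x, y} \<notin> E"
    unfolding has_isolated_vertex_def by blast
  have "{f x, Y} \<notin> (`) f ` E" for Y
  proof
    assume edge: "{f x, Y} \<in> (`) f ` E"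
    then obtain y where "Y = f y" by blast
    with edge x(2) show False by (simp add: inj_image_doubleton_mem_iff[OF assms])
  qed
  with x(1) show "has_isolated_vertex (f ` V) ((`) f ` E)"
    unfolding has_isolated_vertex_def by blast
qed

lemma graph_iso_has_isolated_vertex_iff:
  assumes "graph_iso V1 E1 V2 E2" "simple_graph V1 E1" "simple_graph V2 E2"
  shows "has_isolated_vertex V1 E1 \<longleftrightarrow> has_isolated_vertex V2 E2"
proof -
  obtain f where f: "bij_betw f V1 V2" "\<forall>x\<in>V1. \<forall>y\<in>V1. {x, y} \<in> E1 \<longleftrightarrow> {f x, f y} \<in> E2"
    using assms(1) unfolding graph_iso_def by blast
  have "(\<forall>y. {x, y} \<notin> E1) \<longleftrightarrow> (\<forall>y. {f x, y} \<notin> E2)" if "x \<in> V1" for x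
  proof -
    have "(\<exists>y. {x, y} \<in> E1) \<longleftrightarrow> (\<exists>y\<in>V1. {x, y} \<in> E1)"
      using simple_graph_edgeD(2)[OF assms(2)] by blast
    also have "\<dots> \<longleftrightarrow> (\<exists>y\<in>V1. {f x, f y} \<in> E2)"
      using f(2) that by blast
    also have "\<dots> \<longleftrightarrow> (\<exists>y\<in>V2. {f x, y} \<in> E2)"
      using f(1) unfolding bij_betw_def by blast
    also have "\<dots> \<longleftrightarrow> (\<exists>y. {f x, y} \<in> E2)"
      using simple_graph_edgeD(2)[OF assms(3)] by blast
    finally show ?thesis by blast
  qed
  then show ?thesis
    using f(1) unfolding has_isolated_vertex_def bij_betw_def by blast
qed

lemma simple_graph_delete_isolated_vertices:
  assumes "simple_graph V E"
  shows "simple_graph {x \<in> V. \<exists>y. {x, y} \<in> E} E"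
  using assms unfolding simple_graph_def by (fastforce simp: insert_commute)

text \<open>Isolated vertices reuse the colour of some non-isolated vertex, which exists since
  E is nonempty.\<close>
lemma chromatic_number_delete_isolated_vertices:
  assumes "simple_graph V E" "E \<noteq> {}"
  shows "chromatic_number {x \<in> V. \<exists>y. {x, y} \<in> E} E =o chromatic_number V E"
proof -
  let ?V' = "{x \<in> V. \<exists>y. {x, y} \<in> E}"
  have simple': "simple_graph ?V' E"
    using simple_graph_delete_isolated_vertices[OF assms(1)] .
  obtain a b where "{a, b} \<in> E"
    using assms unfolding simple_graph_def by blast
  then have a: "a \<in> ?V'"
    using simple_graph_edgeD[OF assms(1)] by blast
  have extend: "hom_to_complete V E C" if hom: "hom_to_complete ?V' E C" for C :: "'a set"
  proof -
    obtain f where f: "f ` ?V' \<subseteq> C" "\<forall>x\<in>?V'. \<forall>y\<in>?V'. {x, y} \<in> E \<longrightarrow> f x \<noteq> f y"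
      using hom unfolding hom_to_complete_def by blast
    have endpoints: "x \<in> ?V'" "y \<in> ?V'" if "{x, y} \<in> E" for x y
      using that simple_graph_edgeD[OF assms(1)] by (auto simp: insert_commute)
    show ?thesis
      unfolding hom_to_complete_def
    proof (intro exI[of _ "\<lambda>x. if x \<in> ?V' then f x else f a"] conjI ballI impI)
      show "(\<lambda>x. if x \<in> ?V' then f x else f a) ` V \<subseteq> C"
        using f(1) a by auto
      fix x y assume "x \<in> V" "y \<in> V" "{x, y} \<in> E"
      then show "(if x \<in> ?V' then f x else f a) \<noteq> (if y \<in> ?V' then f y else f a)"
        using f(2) endpoints by simp
    qed
  qed
  show ?thesis
    unfolding ordIso_iff_ordLeq
  proof
    show "chromatic_number ?V' E \<le>o chromatic_number V E"
      using chromatic_number_subgraph_le[OF assms(1) simple'] by blast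
    show "chromatic_number V E \<le>o chromatic_number ?V' E"
      using extend ordLeq_refl[OF card_of_Card_order]
      by (intro chromatic_number_ordLeqI[OF assms(1) simple']) blast
  qed
qed

lemma card_of_insert_image_Some_ordLeq:
  assumes "infinite C"
  shows "|insert None (Some ` C)| \<le>o |C|"
proof -
  have "|{None} \<union> Some ` C| \<le>o |C|"
    using assms card_of_singl_ordLeq[of C None] card_of_image[of Some C]
    by (intro card_of_Un_ordLeq_infinite_Field) (auto simp: Field_card_of card_of_card_order_on)
  then show ?thesis by simp
qed

text \<open>Isolating a vertex costs at most one extra colour, which an infinite chromatic
  number absorbs.\<close>
lemma chromatic_number_isolate_vertex:
  assumes "simple_graph (V :: 'a set) E" "infinite (Field (chromatic_number V E))"
  shows "chromatic_number V {e \<in> E. a \<notin> e} =o chromatic_number V E"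
proof -
  let ?E' = "{e \<in> E. a \<notin> e}"
  have simple': "simple_graph V ?E'"
    using assms(1) unfolding simple_graph_def by blast
  have extend: "\<exists>C1 :: 'a option set. hom_to_complete V E C1 \<and> |C1| \<le>o |C|"
    if hom: "hom_to_complete V ?E' C" for C :: "'a set"
  proof -
    obtain f where f: "f ` V \<subseteq> C" "\<forall>x\<in>V. \<forall>y\<in>V. {x, y} \<in> ?E' \<longrightarrow> f x \<noteq> f y"
      using hom unfolding hom_to_complete_def by blast
    let ?g = "\<lambda>x. if x = a then None else Some (f x)"
    have g: "hom_to_complete V E (insert None (Some ` C))"
      unfolding hom_to_complete_def
    proof (intro exI[of _ ?g] conjI ballI impI)
      show "?g ` V \<subseteq> insert None (Some ` C)"
        using f(1) by auto
      fix x y assume "x \<in> V" "y \<in> V" "{x, y} \<in> E"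
      then show "?g x \<noteq> ?g y"
        using f(2) simple_graph_edgeD(3)[OF assms(1)] by auto
    qed
    then have "infinite C"
      using infinite_colours[OF assms] by auto
    with g show ?thesis
      using card_of_insert_image_Some_ordLeq by blast
  qed
  show ?thesis
    unfolding ordIso_iff_ordLeq
  proof
    show "chromatic_number V ?E' \<le>o chromatic_number V E"
      using chromatic_number_subgraph_le[OF assms(1) simple'] by blast
    show "chromatic_number V E \<le>o chromatic_number V ?E'"
      using extend by (rule chromatic_number_ordLeqI[OF assms(1) simple'])
  qed
qed

lemma is_minor_singleton_image:
  assumes "simple_graph V E" "V' \<subseteq> V" "E' \<subseteq> E"
  shows "is_minor ((\<lambda>x. {x}) ` V') ((`) (\<lambda>x. {x}) ` E') V E"
proof -
  let ?D = "(\<lambda>x. {x}) ` V'"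
  have branch_sets: "\<forall>d\<in>?D. d \<noteq> {} \<and> d \<subseteq> V \<and> induces_connected E d"
    using assms(2) unfolding induces_connected_def by auto
  have disjoint: "\<forall>d\<in>?D. \<forall>e\<in>?D. d \<noteq> e \<longrightarrow> d \<inter> e = {}"
    by auto
  have edges: "X \<noteq> Y \<and> connected_to E X Y"
    if "X \<in> ?D" "Y \<in> ?D" and edge: "{X, Y} \<in> (`) (\<lambda>x. {x}) ` E'" for X Y
  proof -
    obtain x y where xy: "X = {x}" "Y = {y}"
      using \<open>X \<in> ?D\<close> \<open>Y \<in> ?D\<close> by blast
    have "{x, y} \<in> E'"
      using edge unfolding xy inj_image_doubleton_mem_iff[OF inj_singleton] .
    then have "{x, y} \<in> E"
      using assms(3) by blast
    then show ?thesis
      using simple_graph_edgeD(3)[OF assms(1)] xy unfolding connected_to_def by blast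
  qed
  show ?thesis
    unfolding is_minor_def
    using branch_sets disjoint edges by (intro exI[of _ ?D] conjI exI[of _ id]) auto
qed

lemma exists_subgraph_toggling_isolated_vertex:
  assumes "simple_graph V E" "infinite (Field (chromatic_number V E))"
  obtains V' E' where "V' \<subseteq> V" "E' \<subseteq> E" "simple_graph V' E'"
    "chromatic_number V' E' =o chromatic_number V E"
    "has_isolated_vertex V' E' \<longleftrightarrow> \<not> has_isolated_vertex V E"
proof -
  have "E \<noteq> {}"
  proof
    assume "E = {}"
    then have "hom_to_complete V E {undefined :: 'a}"
      unfolding hom_to_complete_def by auto
    from infinite_colours[OF assms this] show False by simp
  qed
  then obtain a b where ab: "{a, b} \<in> E"
    using assms(1) unfolding simple_graph_def by blast
  show ?thesis
  proof (cases "has_isolated_vertex V E")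
    case True
    let ?V' = "{x \<in> V. \<exists>y. {x, y} \<in> E}"
    have "\<not> has_isolated_vertex ?V' E"
      unfolding has_isolated_vertex_def by blast
    then show ?thesis
      using that[of ?V' E] True simple_graph_delete_isolated_vertices[OF assms(1)]
        chromatic_number_delete_isolated_vertices[OF assms(1) \<open>E \<noteq> {}\<close>]
      by blast
  next
    case False
    have "a \<in> V" using simple_graph_edgeD(1)[OF assms(1) ab] .
    then have "has_isolated_vertex V {e \<in> E. a \<notin> e}"
      unfolding has_isolated_vertex_def by blast
    moreover have "simple_graph V {e \<in> E. a \<notin> e}"
      using assms(1) unfolding simple_graph_def by blast
    ultimately show ?thesis
      using that[of V "{e \<in> E. a \<notin> e}"] False chromatic_number_isolate_vertex[OF assms]
      by blast
  qed
qed

theorem proposition2: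
  fixes V :: "'a set" and E :: "'a set set"
  assumes "simple_graph V E"
    and "infinite (Field (chromatic_number V E))"
  shows "\<exists>(VM :: 'a set set) (EM :: 'a set set set).
           simple_graph VM EM \<and> is_minor VM EM V E \<and> \<not> graph_iso VM EM V E \<and>
           (chromatic_number VM EM, chromatic_number V E) \<in> ordIso"
proof -
  obtain V' E' where sub: "V' \<subseteq> V" "E' \<subseteq> E" and simple': "simple_graph V' E'"
    and chi: "chromatic_number V' E' =o chromatic_number V E"
    and toggled: "has_isolated_vertex V' E' \<longleftrightarrow> \<not> has_isolated_vertex V E"
    using exists_subgraph_toggling_isolated_vertex[OF assms] .
  let ?VM = "(\<lambda>x. {x}) ` V'" and ?EM = "(`) (\<lambda>x. {x}) ` E'"
  have simple_M: "simple_graph ?VM ?EM"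
    using simple_graph_inj_image[OF inj_singleton simple'] .
  have "has_isolated_vertex ?VM ?EM \<longleftrightarrow> \<not> has_isolated_vertex V E"
    using toggled has_isolated_vertex_inj_image_iff[OF inj_singleton] by blast
  then have "\<not> graph_iso ?VM ?EM V E"
    using graph_iso_has_isolated_vertex_iff[OF _ simple_M assms(1)] by blast
  moreover have "chromatic_number ?VM ?EM =o chromatic_number V E"
    using ordIso_transitive[OF chromatic_number_inj_image[OF inj_singleton simple'] chi] .
  ultimately show ?thesis
    using simple_M is_minor_singleton_image[OF assms(1) sub] by blast
qed

end
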